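(* For every $\alpha\in\mathbb{N}_0$ and $y\in C^{(2\alpha+4)}(0,\infty)$, $$L_{2\alpha+4,x}^{\alpha}y(x)=-\Big\{L_{2,x}^{2\alpha+1}-\frac{2\alpha+2}{x}-\alpha-1\Big\}L_{2\alpha+2,x}^{\alpha-1}y(x),\qquad x>0.$$
   Context: $D_x^i$ is the $i$-fold derivative. For integer $\alpha\ge-1$, $L_{2\alpha+4,x}^{\alpha}y(x)=(-1)^{\alpha+1}e^x x\,D_x^{\alpha+2}\{e^{-x}D_x^{\alpha+2}[x^{\alpha+1}y(x)]\}$; in particular for $\alpha=-1$ this gives $L_{2,x}^{-1}y=x[y''-y']$. For real $\gamma$, $L_{2,x}^{\gamma}=xD_x^2+(\gamma+1-x)D_x$ (consistent with the previous at $\gamma=-1$). *)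

theory Defs
  imports "HOL-Analysis.Analysis"
begin

definition Dx :: "nat \<Rightarrow> (real \<Rightarrow> real) \<Rightarrow> real \<Rightarrow> real" where
  "Dx i f = (deriv ^^ i) f"

definition Cn_on :: "nat \<Rightarrow> real set \<Rightarrow> (real \<Rightarrow> real) \<Rightarrow> bool" where
  "Cn_on n S y \<longleftrightarrow>
     (\<forall>k<n. \<forall>x\<in>S. (Dx k y has_real_derivative Dx (Suc k) y x) (at x)) \<and>
     continuous_on S (Dx n y)"

text \<open>For integer a \<ge> -1:
  L^a_{2a+4,x} y(x) = (-1)^(a+1) e^x x D^(a+2) { e^(-x) D^(a+2) [x^(a+1) y(x)] }.\<close>
definition Lhigh :: "int \<Rightarrow> (real \<Rightarrow> real) \<Rightarrow> real \<Rightarrow> real" where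
  "Lhigh a y x =
     (-1) ^ nat (a + 1) * exp x * x *
       Dx (nat (a + 2)) (\<lambda>t. exp (- t) * Dx (nat (a + 2)) (\<lambda>s. s ^ nat (a + 1) * y s) t) x"

definition L2 :: "real \<Rightarrow> (real \<Rightarrow> real) \<Rightarrow> real \<Rightarrow> real" where
  "L2 g y x = x * Dx 2 y x + (g + 1 - x) * Dx 1 y x"

end

theory Submission
  imports Defs
begin

text \<open>Both operators are built from R_m g = D^m (e^-x D^m g): with g = x^\<alpha> y,
  the left-hand side is (-1)^(\<alpha>+1) e^x x R_(\<alpha>+2) (x g), and L^(\<alpha>-1)_(2\<alpha>+2) y = (-1)^\<alpha> e^x x K
  with K = R_(\<alpha>+1) g. Leibniz's rule for the factor x, used once inside and once outside the
  exponential, gives the recurrence R_(m+1) (x g) = x K'' + (x + 2m + 2) K' + (m + 1) K for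
  K = R_m g; differentiating e^x x K twice shows that the right-hand side is the same
  combination of K, K', K''.\<close>

lemma Dx_0 [simp]: "Dx 0 f = f"
  by (simp add: Dx_def)

lemma Dx_Suc: "Dx (Suc k) f = Dx k (deriv f)"
  by (simp add: Dx_def funpow_Suc_right del: funpow.simps)

lemma deriv_Dx: "deriv (Dx k f) = Dx (Suc k) f"
  by (simp add: Dx_def)

lemma Dx_Dx: "Dx a (Dx b f) = Dx (a + b) f"
  by (simp add: Dx_def funpow_add)

lemma Dx_cong_open:
  assumes "open S" "\<forall>s\<in>S. f s = g s" "t \<in> S"
  shows "Dx k f t = Dx k g t"
proof -
  have "eventually (\<lambda>s. f s = g s) (nhds t)"
    using eventually_nhds_in_open[OF assms(1,3)] by eventually_elim (use assms(2) in auto)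
  then show ?thesis
    unfolding Dx_def by (rule higher_deriv_cong_ev) simp
qed

lemma Dx_Suc_cong:
  assumes "open S" "\<forall>s\<in>S. (f has_real_derivative f' s) (at s)" "t \<in> S"
  shows "Dx (Suc k) f t = Dx k f' t"
  unfolding Dx_Suc using assms by (intro Dx_cong_open[of S]) (auto intro: DERIV_imp_deriv)

text \<open>This is Cn_on without continuity of the top derivative, which the identity never uses.\<close>

definition differentiable_upto :: "nat \<Rightarrow> real set \<Rightarrow> (real \<Rightarrow> real) \<Rightarrow> bool" where
  "differentiable_upto n S f \<longleftrightarrow>
     (\<forall>k<n. \<forall>t\<in>S. (Dx k f has_real_derivative Dx (Suc k) f t) (at t))"

lemma differentiable_upto_0 [simp]: "differentiable_upto 0 S f"
  by (simp add: differentiable_upto_def)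

lemma differentiable_uptoD:
  "differentiable_upto n S f \<Longrightarrow> k < n \<Longrightarrow> t \<in> S \<Longrightarrow>
     (Dx k f has_real_derivative Dx (Suc k) f t) (at t)"
  unfolding differentiable_upto_def by blast

lemma differentiable_upto_Suc:
  "differentiable_upto (Suc n) S f \<longleftrightarrow>
     (\<forall>t\<in>S. (f has_real_derivative deriv f t) (at t)) \<and> differentiable_upto n S (deriv f)"
  unfolding differentiable_upto_def by (auto simp: less_Suc_eq_0_disj Dx_Suc)

lemma differentiable_upto_mono:
  "differentiable_upto n S f \<Longrightarrow> m \<le> n \<Longrightarrow> differentiable_upto m S f"
  unfolding differentiable_upto_def by auto

lemma differentiable_upto_Dx:
  "differentiable_upto (k + n) S f \<Longrightarrow> differentiable_upto n S (Dx k f)"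
  by (induction k arbitrary: f) (simp_all add: differentiable_upto_Suc Dx_Suc)

lemma differentiable_upto_cong:
  assumes "open S" "\<forall>s\<in>S. f s = g s" "differentiable_upto n S f"
  shows "differentiable_upto n S g"
  unfolding differentiable_upto_def
proof (intro allI impI ballI)
  fix k t assume "k < n" "t \<in> S"
  with assms(3) have "(Dx k f has_real_derivative Dx (Suc k) f t) (at t)"
    by (rule differentiable_uptoD)
  then have "(Dx k g has_real_derivative Dx (Suc k) f t) (at t)"
    by (rule has_field_derivative_transform_within_open[OF _ assms(1) \<open>t \<in> S\<close>])
       (use Dx_cong_open[OF assms(1,2)] in auto)
  then show "(Dx k g has_real_derivative Dx (Suc k) g t) (at t)"
    using Dx_cong_open[OF assms(1,2) \<open>t \<in> S\<close>] by simp
qed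

lemma differentiable_upto_SucI:
  assumes "open S" "\<forall>t\<in>S. (f has_real_derivative f' t) (at t)" "differentiable_upto n S f'"
  shows "differentiable_upto (Suc n) S f"
proof -
  have "\<forall>t\<in>S. f' t = deriv f t"
    using assms(2) by (auto intro: DERIV_imp_deriv[symmetric])
  then show ?thesis
    using assms differentiable_upto_cong by (auto simp: differentiable_upto_Suc intro: DERIV_imp_deriv)
qed

lemma differentiable_upto_add:
  "open S \<Longrightarrow> differentiable_upto n S f \<Longrightarrow> differentiable_upto n S g \<Longrightarrow>
     differentiable_upto n S (\<lambda>t. f t + g t)"
proof (induction n arbitrary: f g)
  case (Suc n)
  then show ?case
    by (intro differentiable_upto_SucI[of S _ "\<lambda>t. deriv f t + deriv g t"])
       (auto simp: differentiable_upto_Suc intro!: derivative_eq_intros)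
qed simp

lemma differentiable_upto_cmult:
  "open S \<Longrightarrow> differentiable_upto n S f \<Longrightarrow> differentiable_upto n S (\<lambda>t. c * f t)"
proof (induction n arbitrary: f)
  case (Suc n)
  then show ?case
    by (intro differentiable_upto_SucI[of S _ "\<lambda>t. c * deriv f t"])
       (auto simp: differentiable_upto_Suc intro!: derivative_eq_intros)
qed simp

lemma differentiable_upto_times_id:
  "open S \<Longrightarrow> differentiable_upto n S f \<Longrightarrow> differentiable_upto n S (\<lambda>t. t * f t)"
proof (induction n arbitrary: f)
  case (Suc n)
  have "differentiable_upto n S f"
    using Suc.prems(2) by (rule differentiable_upto_mono) simp
  with Suc have "differentiable_upto n S (\<lambda>t. f t + t * deriv f t)"
    by (intro differentiable_upto_add) (auto simp: differentiable_upto_Suc)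
  with Suc.prems show ?case
    by (intro differentiable_upto_SucI[of S _ "\<lambda>t. f t + t * deriv f t"])
       (auto simp: differentiable_upto_Suc intro!: derivative_eq_intros)
qed simp

lemma differentiable_upto_exp_mult:
  "open S \<Longrightarrow> differentiable_upto n S f \<Longrightarrow> differentiable_upto n S (\<lambda>t. exp (c * t) * f t)"
proof (induction n arbitrary: f)
  case (Suc n)
  have "differentiable_upto n S f"
    using Suc.prems(2) by (rule differentiable_upto_mono) simp
  with Suc have "differentiable_upto n S (\<lambda>t. c * f t + deriv f t)"
    by (intro differentiable_upto_add differentiable_upto_cmult) (auto simp: differentiable_upto_Suc)
  with Suc.IH Suc.prems(1)
  have "differentiable_upto n S (\<lambda>t. exp (c * t) * (c * f t + deriv f t))"
    by blast
  moreover have "((\<lambda>t. exp (c * t) * f t) has_real_derivative exp (c * t) * (c * f t + deriv f t)) (at t)"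
    if "t \<in> S" for t
    using Suc.prems(2) that unfolding differentiable_upto_Suc
    by (auto intro!: derivative_eq_intros simp: distrib_left)
  ultimately show ?case
    using Suc.prems(1) by (intro differentiable_upto_SucI) auto
qed simp

lemma differentiable_upto_power_mult:
  "open S \<Longrightarrow> differentiable_upto n S f \<Longrightarrow> differentiable_upto n S (\<lambda>t. t ^ a * f t)"
  by (induction a) (auto simp: mult.assoc dest: differentiable_upto_times_id)

lemma Dx_add:
  assumes "open S" "differentiable_upto k S f" "differentiable_upto k S g" "t \<in> S"
  shows "Dx k (\<lambda>t. f t + g t) t = Dx k f t + Dx k g t"
  using assms(2-4)
proof (induction k arbitrary: f g t)
  case (Suc k)
  then have "Dx (Suc k) (\<lambda>t. f t + g t) t = Dx k (\<lambda>t. deriv f t + deriv g t) t"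
    by (intro Dx_Suc_cong[OF assms(1)]) (auto simp: differentiable_upto_Suc intro!: derivative_eq_intros)
  with Suc show ?case
    by (simp add: differentiable_upto_Suc Dx_Suc)
qed simp

lemma Dx_cmult:
  assumes "open S" "differentiable_upto k S f" "t \<in> S"
  shows "Dx k (\<lambda>t. c * f t) t = c * Dx k f t"
  using assms(2,3)
proof (induction k arbitrary: f t)
  case (Suc k)
  then have "Dx (Suc k) (\<lambda>t. c * f t) t = Dx k (\<lambda>t. c * deriv f t) t"
    by (intro Dx_Suc_cong[OF assms(1)]) (auto simp: differentiable_upto_Suc intro!: derivative_eq_intros)
  with Suc show ?case
    by (simp add: differentiable_upto_Suc Dx_Suc)
qed simp

lemma Dx_Suc_times_id:
  assumes "open S" "differentiable_upto (Suc k) S f" "t \<in> S"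
  shows "Dx (Suc k) (\<lambda>t. t * f t) t = t * Dx (Suc k) f t + (k + 1) * Dx k f t"
  using assms(2,3)
proof (induction k arbitrary: f t)
  case 0
  then have "Dx (Suc 0) (\<lambda>t. t * f t) t = f t + t * deriv f t"
    by (subst Dx_Suc_cong[OF assms(1)]) (auto simp: differentiable_upto_Suc intro!: derivative_eq_intros)
  then show ?case
    by (simp add: Dx_Suc)
next
  case (Suc k)
  have f: "differentiable_upto (Suc k) S f"
    using Suc.prems(1) by (rule differentiable_upto_mono) simp
  have f': "differentiable_upto (Suc k) S (deriv f)"
    using Suc.prems(1) by (simp add: differentiable_upto_Suc)
  have "Dx (Suc (Suc k)) (\<lambda>t. t * f t) t = Dx (Suc k) (\<lambda>t. f t + t * deriv f t) t"
    using Suc.prems by (intro Dx_Suc_cong[OF assms(1)])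
      (auto simp: differentiable_upto_Suc intro!: derivative_eq_intros)
  also have "\<dots> = Dx (Suc k) f t + Dx (Suc k) (\<lambda>t. t * deriv f t) t"
    using f f' Suc.prems(2) by (intro Dx_add[OF assms(1)] differentiable_upto_times_id[OF assms(1)])
  also have "\<dots> = Dx (Suc k) f t + t * Dx (Suc (Suc k)) f t + (k + 1) * Dx (Suc k) f t"
    using Suc.IH[OF f' Suc.prems(2)] by (simp add: Dx_Suc)
  finally show ?case
    by (simp add: algebra_simps)
qed

definition rodrigues :: "nat \<Rightarrow> (real \<Rightarrow> real) \<Rightarrow> real \<Rightarrow> real" where
  "rodrigues m g = Dx m (\<lambda>t. exp (- t) * Dx m g t)"

lemma differentiable_upto_exp_minus_mult:
  "open S \<Longrightarrow> differentiable_upto n S f \<Longrightarrow> differentiable_upto n S (\<lambda>t. exp (- t) * f t)"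
  using differentiable_upto_exp_mult[of S n f "-1"] by simp

lemma differentiable_upto_rodrigues:
  assumes "open S" "differentiable_upto (2 * m + k) S g"
  shows "differentiable_upto k S (rodrigues m g)"
proof -
  have "differentiable_upto (m + k) S (Dx m g)"
    using assms(2) by (intro differentiable_upto_Dx) (simp add: mult_2 add.assoc)
  then have "differentiable_upto (m + k) S (\<lambda>t. exp (- t) * Dx m g t)"
    by (rule differentiable_upto_exp_minus_mult[OF assms(1)])
  then show ?thesis
    unfolding rodrigues_def by (rule differentiable_upto_Dx)
qed

lemma rodrigues_Suc_times_id:
  assumes S: "open S" and g: "differentiable_upto (2 * m + 2) S g" and x: "x \<in> S"
  shows "rodrigues (Suc m) (\<lambda>t. t * g t) x =
    x * Dx 2 (rodrigues m g) x + (x + 2 * m + 2) * Dx 1 (rodrigues m g) x + (m + 1) * rodrigues m g x"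
proof -
  define G where "G = Dx m g"
  define H where "H = (\<lambda>t. exp (- t) * G t)"
  have G: "differentiable_upto (m + 2) S G"
    unfolding G_def using g by (intro differentiable_upto_Dx) (simp add: mult_2 add.assoc)
  have H: "differentiable_upto (m + 2) S H"
    unfolding H_def by (rule differentiable_upto_exp_minus_mult[OF S G])
  have H': "differentiable_upto (Suc m) S (deriv H)"
    using H by (simp add: differentiable_upto_Suc)
  have H1: "differentiable_upto (Suc m) S H"
    using H by (rule differentiable_upto_mono) simp
  have dH: "deriv H t = exp (- t) * deriv G t - H t" if "t \<in> S" for t
  proof -
    have "(G has_real_derivative deriv G t) (at t)"
      using G that by (simp add: differentiable_upto_Suc)
    then have "(H has_real_derivative exp (- t) * deriv G t - H t) (at t)"
      unfolding H_def by (auto intro!: derivative_eq_intros)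
    then show ?thesis
      by (rule DERIV_imp_deriv)
  qed
  have inner: "\<forall>t\<in>S. exp (- t) * Dx (Suc m) (\<lambda>s. s * g s) t = t * deriv H t + t * H t + (m + 1) * H t"
  proof
    fix t assume t: "t \<in> S"
    have "differentiable_upto (Suc m) S g"
      using g by (rule differentiable_upto_mono) simp
    then have "Dx (Suc m) (\<lambda>s. s * g s) t = t * deriv G t + (m + 1) * G t"
      using Dx_Suc_times_id[OF S _ t] by (simp add: G_def deriv_Dx)
    then have "exp (- t) * Dx (Suc m) (\<lambda>s. s * g s) t = t * (exp (- t) * deriv G t) + (m + 1) * H t"
      by (simp add: H_def algebra_simps)
    then show "exp (- t) * Dx (Suc m) (\<lambda>s. s * g s) t = t * deriv H t + t * H t + (m + 1) * H t"
      by (simp add: dH[OF t] algebra_simps)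
  qed
  have dA: "differentiable_upto (Suc m) S (\<lambda>t. t * deriv H t)"
    by (rule differentiable_upto_times_id[OF S H'])
  have dB: "differentiable_upto (Suc m) S (\<lambda>t. t * H t)"
    by (rule differentiable_upto_times_id[OF S H1])
  have dC: "differentiable_upto (Suc m) S (\<lambda>t. (m + 1) * H t)"
    by (rule differentiable_upto_cmult[OF S H1])
  have "rodrigues (Suc m) (\<lambda>t. t * g t) x = Dx (Suc m) (\<lambda>t. t * deriv H t + t * H t + (m + 1) * H t) x"
    unfolding rodrigues_def by (rule Dx_cong_open[OF S inner x])
  also have "\<dots> = Dx (Suc m) (\<lambda>t. t * deriv H t) x + Dx (Suc m) (\<lambda>t. t * H t) x
      + Dx (Suc m) (\<lambda>t. (m + 1) * H t) x"
    using Dx_add[OF S differentiable_upto_add[OF S dA dB] dC x] Dx_add[OF S dA dB x] by simp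
  also have "\<dots> = x * Dx (Suc (Suc m)) H x + (m + 1) * Dx (Suc m) H x
      + (x * Dx (Suc m) H x + (m + 1) * Dx m H x) + (m + 1) * Dx (Suc m) H x"
    using Dx_Suc_times_id[OF S H' x] Dx_Suc_times_id[OF S H1 x] Dx_cmult[OF S H1 x]
    by (simp add: Dx_Suc[symmetric] add.commute)
  also have "\<dots> = x * Dx 2 (rodrigues m g) x + (x + 2 * m + 2) * Dx 1 (rodrigues m g) x
      + (m + 1) * rodrigues m g x"
    by (simp add: rodrigues_def Dx_Dx H_def G_def algebra_simps)
  finally show ?thesis
    by simp
qed

lemma L2_scaled_exp_times_id:
  assumes S: "open S" and K: "differentiable_upto 2 S K" and x: "x \<in> S" "x \<noteq> 0"
  shows "L2 \<gamma> (\<lambda>t. c * (exp t * t * K t)) x - ((\<gamma> + 1) / x + \<beta>) * (c * (exp x * x * K x)) =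
    c * exp x * x * (x * Dx 2 K x + (x + \<gamma> + 3) * Dx 1 K x + (\<gamma> + 2 - \<beta>) * K x)"
proof -
  define K1 where "K1 = Dx 1 K"
  define M where "M = (\<lambda>t. c * (exp t * t * K t))"
  define M' where "M' = (\<lambda>t. c * (exp t * (t + 1) * K t + exp t * t * K1 t))"
  have dK: "(K has_real_derivative K1 t) (at t)" if "t \<in> S" for t
    using differentiable_uptoD[OF K _ that, of 0] by (simp add: K1_def)
  have dK1: "(K1 has_real_derivative Dx 2 K x) (at x)"
    using differentiable_uptoD[OF K _ x(1), of 1] by (simp add: K1_def numeral_2_eq_2)
  have dM: "\<forall>t\<in>S. (M has_real_derivative M' t) (at t)"
    unfolding M_def M'_def by (auto intro!: derivative_eq_intros dK simp: algebra_simps)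
  have dM': "(M' has_real_derivative
      c * (exp x * (x + 2) * K x + 2 * exp x * (x + 1) * K1 x + exp x * x * Dx 2 K x)) (at x)"
    unfolding M'_def by (auto intro!: derivative_eq_intros dK x dK1 simp: algebra_simps)
  have "Dx 1 M x = M' x"
    using dM x(1) by (simp add: Dx_Suc DERIV_imp_deriv)
  moreover have "Dx 2 M x = Dx 1 M' x"
    using Dx_Suc_cong[OF S dM x(1), of 1] by (simp add: numeral_2_eq_2)
  moreover have "Dx 1 M' x =
      c * (exp x * (x + 2) * K x + 2 * exp x * (x + 1) * K1 x + exp x * x * Dx 2 K x)"
    using dM' by (simp add: Dx_Suc DERIV_imp_deriv)
  ultimately show ?thesis
    using x(2) unfolding L2_def M_def[symmetric] K1_def[symmetric] by (simp add: M_def M'_def field_simps)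
qed

lemma Lhigh_eq_rodrigues:
  "Lhigh (int a - 1) y = (\<lambda>x. (-1) ^ a * (exp x * x * rodrigues (Suc a) (\<lambda>s. s ^ a * y s) x))"
proof -
  have "nat (int a - 1 + 1) = a" "nat (int a - 1 + 2) = Suc a"
    by auto
  then show ?thesis
    by (auto simp: Lhigh_def rodrigues_def)
qed

theorem theorem3p1:
  fixes \<alpha> :: nat and y :: "real \<Rightarrow> real" and x :: real
  assumes "Cn_on (2 * \<alpha> + 4) {0<..} y"
    and "x > 0"
  shows "Lhigh (int \<alpha>) y x =
    - (L2 (2 * real \<alpha> + 1) (Lhigh (int \<alpha> - 1) y) x
       - ((2 * real \<alpha> + 2) / x + real \<alpha> + 1) * Lhigh (int \<alpha> - 1) y x)"
proof -
  define g where "g = (\<lambda>s. s ^ \<alpha> * y s)"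
  define K where "K = rodrigues (Suc \<alpha>) g"
  have "differentiable_upto (2 * Suc \<alpha> + 2) {0<..} y"
    using assms(1) by (simp add: Cn_on_def differentiable_upto_def)
  then have g: "differentiable_upto (2 * Suc \<alpha> + 2) {0<..} g"
    unfolding g_def by (simp add: differentiable_upto_power_mult)
  then have "differentiable_upto 2 {0<..} K"
    unfolding K_def by (intro differentiable_upto_rodrigues) simp_all
  then have rhs: "L2 (2 * real \<alpha> + 1) (Lhigh (int \<alpha> - 1) y) x
      - ((2 * real \<alpha> + 2) / x + real \<alpha> + 1) * Lhigh (int \<alpha> - 1) y x
    = (-1) ^ \<alpha> * exp x * x * (x * Dx 2 K x + (x + 2 * \<alpha> + 4) * Dx 1 K x + (\<alpha> + 2) * K x)"
    using L2_scaled_exp_times_id[of "{0<..}" K x "2 * real \<alpha> + 1" "(-1) ^ \<alpha>" "real \<alpha> + 1"] assms(2)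
    by (simp add: Lhigh_eq_rodrigues K_def g_def add_ac)
  have "Lhigh (int \<alpha>) y x = (-1) ^ Suc \<alpha> * (exp x * x * rodrigues (Suc (Suc \<alpha>)) (\<lambda>s. s * g s) x)"
    using Lhigh_eq_rodrigues[of "Suc \<alpha>" y] by (simp add: g_def mult.assoc)
  also have "\<dots> = - ((-1) ^ \<alpha> * exp x * x * (x * Dx 2 K x + (x + 2 * \<alpha> + 4) * Dx 1 K x + (\<alpha> + 2) * K x))"
    using rodrigues_Suc_times_id[OF _ g, of x] assms(2) by (simp add: K_def algebra_simps)
  finally show ?thesis
    by (simp add: rhs)
qed

end
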